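(* Let $n$ be a positive integer and let $\alpha,\beta,\gamma,\delta: \mathcal{P}(n) \to [0,\infty)$ satisfy \[ \alpha(A)\beta(B) \leq \gamma(A \cup B)\,\delta(A \cap B) \quad \text{for all } A,B \in \mathcal{P}(n). \] Then \[ \sum_{A \in \mathcal{P}(n)}\alpha(A)\beta(A^c) \leq \sum_{C \in \mathcal{P}(n)}\gamma(C)\delta(C^c). \]
   Context: $[n]=\{1,\dots,n\}$, $\mathcal{P}(n)$ denotes the power set of $[n]$, and $A^c = [n]\setminus A$ denotes the complement of $A$ in $[n]$. *)

theory Defs
  imports Complex_Main
begin

end

theory Submission
  imports Defs
begin

(* The theorem is the "complemented" corollary of the Ahlswede-Daykin four functions
   theorem.
   The proof is by induction on S: the one-point case is an inequality between eight
   nonnegative reals, and adding a point x is handled by "folding" every function along x,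
   i.e. replacing f by  A |-> f A + f (insert x A)  on subsets of S.
   For the theorem, apply the four functions theorem to
     u A = alpha A * beta (S - A),   u' A = u (S - A),
     v A = gamma A * delta (S - A),  v' A = v (S - A);
   the hypothesis for (u, u', v, v') is the product of the hypothesis for (A, B) and for
   (S - B, S - A).  Since complementation permutes Pow S, the conclusion reads
   (Sum u)^2 <= (Sum v)^2, and taking square roots gives the claim. *)

text \<open>This is the inequality \<open>p + q \<le> w + r\<close> for
  \<open>p, q \<le> w\<close> and \<open>p q \<le> r w\<close>, which follows from \<open>(w - p)(w - q) \<ge> 0\<close>.\<close>

lemma sum_le_of_prod_le:
  fixes p q w r :: real
  assumes "0 \<le> p" "0 \<le> q" "0 \<le> r" "p \<le> w" "q \<le> w" "p * q \<le> r * w"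
  shows "p + q \<le> w + r"
proof (cases "w = 0")
  case True
  then show ?thesis using assms by linarith
next
  case False
  then have w_pos: "w > 0" using assms by linarith
  have "0 \<le> (w - p) * (w - q)" using assms by (intro mult_nonneg_nonneg) auto
  then have "w * (p + q) \<le> w * (w + r)" using assms(6) by (simp add: algebra_simps)
  then show ?thesis using w_pos by (simp add: mult_le_cancel_left)
qed

text \<open>The four functions theorem for the lattice \<open>{\<emptyset>, {x}}\<close>, with values
  indexed by \<open>0\<close> (absent) and \<open>1\<close> (present).\<close>

lemma four_functions_two_point:
  fixes a0 a1 b0 b1 c0 c1 d0 d1 :: real
  assumes nonneg: "0 \<le> a0" "0 \<le> a1" "0 \<le> b0" "0 \<le> b1" "0 \<le> c0" "0 \<le> c1" "0 \<le> d0" "0 \<le> d1"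
    and h00: "a0 * b0 \<le> c0 * d0" and h01: "a0 * b1 \<le> c1 * d0"
    and h10: "a1 * b0 \<le> c1 * d0" and h11: "a1 * b1 \<le> c1 * d1"
  shows "(a0 + a1) * (b0 + b1) \<le> (c0 + c1) * (d0 + d1)"
proof -
  have "(a0 * b1) * (a1 * b0) = (a0 * b0) * (a1 * b1)" by simp
  also have "\<dots> \<le> (c0 * d0) * (c1 * d1)"
    using nonneg by (intro mult_mono[OF h00 h11]) auto
  also have "\<dots> = (c0 * d1) * (c1 * d0)" by simp
  finally have cross: "a0 * b1 + a1 * b0 \<le> c1 * d0 + c0 * d1"
    using nonneg h01 h10 by (intro sum_le_of_prod_le) auto
  have "(a0 + a1) * (b0 + b1) = a0 * b0 + a1 * b1 + (a0 * b1 + a1 * b0)"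
    by (simp add: algebra_simps)
  also have "\<dots> \<le> c0 * d0 + c1 * d1 + (c1 * d0 + c0 * d1)"
    using h00 h11 cross by linarith
  also have "\<dots> = (c0 + c1) * (d0 + d1)" by (simp add: algebra_simps)
  finally show ?thesis .
qed

definition fold_at :: "'a \<Rightarrow> ('a set \<Rightarrow> real) \<Rightarrow> 'a set \<Rightarrow> real" where
  "fold_at x f A = f A + f (insert x A)"

lemma sum_Pow_insert:
  fixes f :: "'a set \<Rightarrow> real"
  assumes "finite S" "x \<notin> S"
  shows "(\<Sum>A\<in>Pow (insert x S). f A) = (\<Sum>A\<in>Pow S. fold_at x f A)"
proof -
  have disjoint: "Pow S \<inter> insert x ` Pow S = {}" using assms(2) by auto
  have inj: "inj_on (insert x) (Pow S)"
    using assms(2) unfolding inj_on_def by (metis PowD insert_ident subsetD)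
  have "(\<Sum>A\<in>Pow (insert x S). f A) = (\<Sum>A\<in>Pow S. f A) + (\<Sum>A\<in>insert x ` Pow S. f A)"
    unfolding Pow_insert using disjoint assms(1) by (simp add: sum.union_disjoint)
  also have "(\<Sum>A\<in>insert x ` Pow S. f A) = (\<Sum>A\<in>Pow S. f (insert x A))"
    using inj by (simp add: sum.reindex)
  finally show ?thesis by (simp add: sum.distrib fold_at_def)
qed

text \<open>Folding preserves the four functions hypothesis: for \<open>A, B \<subseteq> S\<close> with
  \<open>x \<notin> S\<close>, the four combinations of adding \<open>x\<close> or not to \<open>A\<close> and \<open>B\<close> are
  exactly the hypotheses of the two-point inequality.\<close>

lemma fold_at_four_functions:
  fixes \<alpha> \<beta> \<gamma> \<delta> :: "'a set \<Rightarrow> real"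
  assumes "A \<subseteq> S" "B \<subseteq> S" "x \<notin> S"
    and nonneg: "\<And>C. C \<subseteq> insert x S \<Longrightarrow> 0 \<le> \<alpha> C \<and> 0 \<le> \<beta> C \<and> 0 \<le> \<gamma> C \<and> 0 \<le> \<delta> C"
    and hyp: "\<And>C D. C \<subseteq> insert x S \<Longrightarrow> D \<subseteq> insert x S \<Longrightarrow>
                \<alpha> C * \<beta> D \<le> \<gamma> (C \<union> D) * \<delta> (C \<inter> D)"
  shows "fold_at x \<alpha> A * fold_at x \<beta> B
           \<le> fold_at x \<gamma> (A \<union> B) * fold_at x \<delta> (A \<inter> B)"
proof -
  have x_notin: "x \<notin> A" "x \<notin> B" using assms(1-3) by auto
  have h00: "\<alpha> A * \<beta> B \<le> \<gamma> (A \<union> B) * \<delta> (A \<inter> B)"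
    using hyp[of A B] assms(1,2) by auto
  have h01: "\<alpha> A * \<beta> (insert x B) \<le> \<gamma> (insert x (A \<union> B)) * \<delta> (A \<inter> B)"
    using hyp[of A "insert x B"] assms(1,2) x_notin by auto
  have h10: "\<alpha> (insert x A) * \<beta> B \<le> \<gamma> (insert x (A \<union> B)) * \<delta> (A \<inter> B)"
    using hyp[of "insert x A" B] assms(1,2) x_notin by auto
  have h11: "\<alpha> (insert x A) * \<beta> (insert x B) \<le> \<gamma> (insert x (A \<union> B)) * \<delta> (insert x (A \<inter> B))"
    using hyp[of "insert x A" "insert x B"] assms(1,2) by auto
  have subsets: "A \<subseteq> insert x S" "insert x A \<subseteq> insert x S" "B \<subseteq> insert x S"
    "insert x B \<subseteq> insert x S" "A \<union> B \<subseteq> insert x S" "insert x (A \<union> B) \<subseteq> insert x S"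
    "A \<inter> B \<subseteq> insert x S" "insert x (A \<inter> B) \<subseteq> insert x S"
    using assms(1,2) by auto
  show ?thesis
    unfolding fold_at_def
    by (rule four_functions_two_point[OF _ _ _ _ _ _ _ _ h00 h01 h10 h11])
       (use nonneg[OF subsets(1)] nonneg[OF subsets(2)] nonneg[OF subsets(3)]
            nonneg[OF subsets(4)] nonneg[OF subsets(5)] nonneg[OF subsets(6)]
            nonneg[OF subsets(7)] nonneg[OF subsets(8)] in auto)
qed

theorem four_functions:
  fixes \<alpha> \<beta> \<gamma> \<delta> :: "'a set \<Rightarrow> real"
  assumes "finite S"
    and "\<And>A. A \<subseteq> S \<Longrightarrow> 0 \<le> \<alpha> A \<and> 0 \<le> \<beta> A \<and> 0 \<le> \<gamma> A \<and> 0 \<le> \<delta> A"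
    and "\<And>A B. A \<subseteq> S \<Longrightarrow> B \<subseteq> S \<Longrightarrow> \<alpha> A * \<beta> B \<le> \<gamma> (A \<union> B) * \<delta> (A \<inter> B)"
  shows "(\<Sum>A\<in>Pow S. \<alpha> A) * (\<Sum>A\<in>Pow S. \<beta> A) \<le> (\<Sum>A\<in>Pow S. \<gamma> A) * (\<Sum>A\<in>Pow S. \<delta> A)"
  using assms
proof (induction S arbitrary: \<alpha> \<beta> \<gamma> \<delta> rule: finite_induct)
  case empty
  then show ?case by simp
next
  case (insert x S)
  have "(\<Sum>A\<in>Pow S. fold_at x \<alpha> A) * (\<Sum>A\<in>Pow S. fold_at x \<beta> A)
          \<le> (\<Sum>A\<in>Pow S. fold_at x \<gamma> A) * (\<Sum>A\<in>Pow S. fold_at x \<delta> A)"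
  proof (rule insert.IH)
    fix A assume "A \<subseteq> S"
    then have "A \<subseteq> insert x S" "insert x A \<subseteq> insert x S" by auto
    then show "0 \<le> fold_at x \<alpha> A \<and> 0 \<le> fold_at x \<beta> A \<and> 0 \<le> fold_at x \<gamma> A \<and> 0 \<le> fold_at x \<delta> A"
      using insert.prems(1) unfolding fold_at_def by (meson add_nonneg_nonneg)
  next
    fix A B assume "A \<subseteq> S" "B \<subseteq> S"
    then show "fold_at x \<alpha> A * fold_at x \<beta> B \<le> fold_at x \<gamma> (A \<union> B) * fold_at x \<delta> (A \<inter> B)"
      using insert.hyps(2) insert.prems by (rule fold_at_four_functions)
  qed
  then show ?case using insert.hyps by (simp add: sum_Pow_insert)
qed

lemma sum_Pow_complement:
  fixes f :: "'a set \<Rightarrow> real"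
  shows "(\<Sum>A\<in>Pow S. f (S - A)) = (\<Sum>A\<in>Pow S. f A)"
proof -
  have "bij_betw (\<lambda>A. S - A) (Pow S) (Pow S)"
    by (rule bij_betw_byWitness[where f'="\<lambda>A. S - A"]) auto
  then show ?thesis by (rule sum.reindex_bij_betw)
qed

text \<open>The products \<open>\<alpha> A * \<beta> (S - A)\<close> and \<open>\<gamma> C * \<delta> (S - C)\<close>, together with their
  complemented versions, satisfy the four functions hypothesis: multiply the
  hypothesis for \<open>(A, B)\<close> with the one for \<open>(S - B, S - A)\<close>.\<close>

lemma complemented_four_functions:
  fixes \<alpha> \<beta> \<gamma> \<delta> :: "'a set \<Rightarrow> real"
  assumes AB: "A \<subseteq> S" "B \<subseteq> S"
    and nonneg: "\<And>C. C \<subseteq> S \<Longrightarrow> 0 \<le> \<alpha> C \<and> 0 \<le> \<beta> C \<and> 0 \<le> \<gamma> C \<and> 0 \<le> \<delta> C"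
    and hyp: "\<And>C D. C \<subseteq> S \<Longrightarrow> D \<subseteq> S \<Longrightarrow> \<alpha> C * \<beta> D \<le> \<gamma> (C \<union> D) * \<delta> (C \<inter> D)"
  shows "(\<alpha> A * \<beta> (S - A)) * (\<alpha> (S - B) * \<beta> (S - (S - B)))
           \<le> (\<gamma> (A \<union> B) * \<delta> (S - (A \<union> B)))
             * (\<gamma> (S - (A \<inter> B)) * \<delta> (S - (S - (A \<inter> B))))"
proof -
  have h1: "\<alpha> A * \<beta> B \<le> \<gamma> (A \<union> B) * \<delta> (A \<inter> B)"
    using hyp AB by simp
  have "\<alpha> (S - B) * \<beta> (S - A) \<le> \<gamma> ((S - B) \<union> (S - A)) * \<delta> ((S - B) \<inter> (S - A))"
    by (rule hyp) auto
  moreover have "(S - B) \<union> (S - A) = S - (A \<inter> B)" "(S - B) \<inter> (S - A) = S - (A \<union> B)"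
    by auto
  ultimately have h2: "\<alpha> (S - B) * \<beta> (S - A) \<le> \<gamma> (S - (A \<inter> B)) * \<delta> (S - (A \<union> B))"
    by simp
  have double_compl: "S - (S - B) = B" "S - (S - (A \<inter> B)) = A \<inter> B" using AB by auto
  have subsets: "A \<inter> B \<subseteq> S" "A \<union> B \<subseteq> S" "S - A \<subseteq> S" "S - B \<subseteq> S" using AB by auto
  have "(\<alpha> A * \<beta> B) * (\<alpha> (S - B) * \<beta> (S - A))
          \<le> (\<gamma> (A \<union> B) * \<delta> (A \<inter> B)) * (\<gamma> (S - (A \<inter> B)) * \<delta> (S - (A \<union> B)))"
    by (rule mult_mono[OF h1 h2])
       (use nonneg[OF subsets(1)] nonneg[OF subsets(2)] nonneg[OF subsets(3)]
            nonneg[OF subsets(4)] in auto)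
  then show ?thesis unfolding double_compl by (simp add: ac_simps)
qed

theorem four_functions_complemented:
  fixes \<alpha> \<beta> \<gamma> \<delta> :: "'a set \<Rightarrow> real"
  assumes "finite S"
    and nonneg: "\<And>A. A \<subseteq> S \<Longrightarrow> 0 \<le> \<alpha> A \<and> 0 \<le> \<beta> A \<and> 0 \<le> \<gamma> A \<and> 0 \<le> \<delta> A"
    and hyp: "\<And>A B. A \<subseteq> S \<Longrightarrow> B \<subseteq> S \<Longrightarrow> \<alpha> A * \<beta> B \<le> \<gamma> (A \<union> B) * \<delta> (A \<inter> B)"
  shows "(\<Sum>A\<in>Pow S. \<alpha> A * \<beta> (S - A)) \<le> (\<Sum>C\<in>Pow S. \<gamma> C * \<delta> (S - C))"
proof -
  define u where "u A = \<alpha> A * \<beta> (S - A)" for A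
  define v where "v C = \<gamma> C * \<delta> (S - C)" for C
  have "(\<Sum>A\<in>Pow S. u A) * (\<Sum>A\<in>Pow S. u (S - A))
          \<le> (\<Sum>A\<in>Pow S. v A) * (\<Sum>A\<in>Pow S. v (S - A))"
  proof (rule four_functions[OF \<open>finite S\<close>])
    fix A assume "A \<subseteq> S"
    moreover have "S - A \<subseteq> S" "S - (S - A) \<subseteq> S" by auto
    ultimately show "0 \<le> u A \<and> 0 \<le> u (S - A) \<and> 0 \<le> v A \<and> 0 \<le> v (S - A)"
      unfolding u_def v_def using nonneg by (meson mult_nonneg_nonneg)
  next
    fix A B assume "A \<subseteq> S" "B \<subseteq> S"
    then show "u A * u (S - B) \<le> v (A \<union> B) * v (S - (A \<inter> B))"
      unfolding u_def v_def using nonneg hyp by (rule complemented_four_functions)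
  qed
  then have "(\<Sum>A\<in>Pow S. u A)\<^sup>2 \<le> (\<Sum>A\<in>Pow S. v A)\<^sup>2"
    by (simp add: sum_Pow_complement power2_eq_square)
  moreover have "0 \<le> (\<Sum>A\<in>Pow S. v A)"
    unfolding v_def using nonneg by (intro sum_nonneg) (simp add: mult_nonneg_nonneg)
  ultimately show ?thesis unfolding u_def v_def by (rule power2_le_imp_le)
qed

theorem theorem2p2:
  fixes n :: nat and \<alpha> \<beta> \<gamma> \<delta> :: "nat set \<Rightarrow> real"
  assumes "n \<ge> 1"
    and "\<And>A. A \<subseteq> {1..n} \<Longrightarrow> \<alpha> A \<ge> 0"
    and "\<And>A. A \<subseteq> {1..n} \<Longrightarrow> \<beta> A \<ge> 0"
    and "\<And>A. A \<subseteq> {1..n} \<Longrightarrow> \<gamma> A \<ge> 0"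
    and "\<And>A. A \<subseteq> {1..n} \<Longrightarrow> \<delta> A \<ge> 0"
    and "\<And>A B. A \<subseteq> {1..n} \<Longrightarrow> B \<subseteq> {1..n} \<Longrightarrow>
           \<alpha> A * \<beta> B \<le> \<gamma> (A \<union> B) * \<delta> (A \<inter> B)"
  shows "(\<Sum>A\<in>Pow {1..n}. \<alpha> A * \<beta> ({1..n} - A))
           \<le> (\<Sum>C\<in>Pow {1..n}. \<gamma> C * \<delta> ({1..n} - C))"
  using assms(2-6) by (intro four_functions_complemented) auto

end
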